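(* Let $D,\widetilde D,K,\widetilde K$ be nonempty sets, $\emptyset\ne F\subseteq\mathcal{F}(D,K)$, $\emptyset\ne\widetilde F\subseteq\mathcal{F}(\widetilde D,\widetilde K)$, and let $\Gamma:F\to\widetilde F$ be a mapping for which there exist $\kappa,m^*\in\mathbb{N}$ and mappings $\eta_j:\widetilde D\to D$ ($j=0,\dots,\kappa-1$), $\beta:K\to\mathbb{Z}[0,2^{m^*})$, $\rho:\widetilde D\times\mathbb{Z}[0,2^{m^*})^\kappa\to\widetilde K$ such that for all $f\in F$, $s\in\widetilde D$, $(\Gamma(f))(s)=\rho(s,\beta(f(\eta_0(s))),\dots,\beta(f(\eta_{\kappa-1}(s))))$. Let $G$ be a normed space and $\widetilde A$ a quantum algorithm from $\widetilde F$ to $G$. Then there is a quantum algorithm $A$ from $F$ to $G$ with $n_q(A)=2\kappa\,n_q(\widetilde A)$ and $A(f)=\widetilde A(\Gamma(f))$ for all $f\in F$. Consequently, if $\widetilde S:\widetilde F\to G$ is any mapping and $S=\widetilde S\circ\Gamma$, then for each $n\in\mathbb{N}_0$, $e^q_{2\kappa n}(S,F)\le e^q_n(\widetilde S,\widetilde F)$.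
   Context: For nonempty sets $D',K'$, $\mathcal{F}(D',K')$ is the set of all functions $D'\to K'$; $\mathbb{Z}[0,N)=\{0,\dots,N-1\}$. $H_m=(\mathbb{C}^2)^{\otimes m}$ has canonical basis $|i\rangle$, $i\in\mathbb{Z}[0,2^m)$, where $|i\rangle=e_{j_0}\otimes\cdots\otimes e_{j_{m-1}}$ with $i=\sum_k j_k2^{m-1-k}$. For nonempty $F\subseteq\mathcal{F}(D',K')$, a quantum query on $F$ is a tuple $Q=(m,m',m'',Z,\tau,\beta)$ with $m,m',m''\in\mathbb{N}$, $m'+m''\le m$, $\emptyset\ne Z\subseteq\mathbb{Z}[0,2^{m'})$, $\tau:Z\to D'$, $\beta:K'\to\mathbb{Z}[0,2^{m''})$; $m(Q)=m$. For $f\in F$, $Q_f$ is the unitary on $H_m=H_{m'}\otimes H_{m''}\otimes H_{m-m'-m''}$ with $Q_f|i\rangle|x\rangle|y\rangle=|i\rangle|x\oplus\beta(f(\tau(i)))\rangle|y\rangle$ if $i\in Z$ and $=|i\rangle|x\rangle|y\rangle$ otherwise ($\oplus$ = addition mod $2^{m''}$). A quantum algorithm on $F$ with no measurement is $A=(Q,(U_j)_{j=0}^n)$, $n\in\mathbb{N}_0$, $U_j$ unitary on $H_{m(Q)}$; $A_f=U_nQ_fU_{n-1}\cdots U_1Q_fU_0$, $n_q(A)=n$, $m(A)=m(Q)$, and $A_f(x,y)$ denotes the matrix entries in the canonical basis. For a normed space $G$ over $\mathbb{R}$ or $\mathbb{C}$, a quantum algorithm from $F$ to $G$ (with $k\in\mathbb{N}$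 measurements) is $A=((A_\ell)_{\ell=0}^{k-1},(b_\ell)_{\ell=0}^{k-1},\varphi)$ with $A_\ell$ algorithms on $F$ with no measurement, $m_\ell=m(A_\ell)$, $b_0\in\mathbb{Z}[0,2^{m_0})$, $b_\ell:\prod_{i<\ell}\mathbb{Z}[0,2^{m_i})\to\mathbb{Z}[0,2^{m_\ell})$, $\varphi:\prod_{\ell<k}\mathbb{Z}[0,2^{m_\ell})\to G$. Its output at $f$ is the probability measure $A(f)(C)=\sum_{\varphi(x_0,\dots,x_{k-1})\in C}\prod_{\ell=0}^{k-1}|A_{\ell,f}(x_\ell,b_\ell(x_0,\dots,x_{\ell-1}))|^2$; $n_q(A)=\sum_\ell n_q(A_\ell)$. For $S:F\to G$, $\theta\ge0$: $e(S,A,f,\theta)=\inf\{\varepsilon\ge0: \mathbf{P}\{\|S(f)-\zeta\|>\varepsilon\}\le\theta\}$ with $\zeta$ a random variable with distribution $A(f)$; $e(S,A,F,\theta)=\sup_{f\in F}e(S,A,f,\theta)$ (possibly $+\infty$); $e_n^q(S,F,\theta)=\inf\{e(S,A,F,\theta): A$ a quantum algorithm from $F$ to $G$ with $n_q(A)\le n\}$; $e_n^q(S,F)=e_n^q(S,F,1/4)$. *)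

theory Defs
  imports Complex_Main "HOL-Library.Extended_Real"
begin

text \<open>The sets D', K' of the paper are represented by the (nonempty) types
 'd, 'k; a function D' -> K' is a HOL function of type 'd => 'k.
 Linear operators on H_m are represented by their matrices in the canonical basis,
 as functions nat => nat => complex (row index, column index), only entries with
 indices in Z[0,2^m) being relevant. The matrix entry A(x,y) is the entry in row x,
 column y, i.e. the coefficient of |x> in A|y>.\<close>

type_synonym cmat = "nat \<Rightarrow> nat \<Rightarrow> complex"

definition mmul :: "nat \<Rightarrow> cmat \<Rightarrow> cmat \<Rightarrow> cmat" where
  "mmul m A B = (\<lambda>i j. \<Sum>k<2^m. A i k * B k j)"

definition unitary_op :: "nat \<Rightarrow> cmat \<Rightarrow> bool" where
  "unitary_op m U \<longleftrightarrow>
     (\<forall>i<2^m. \<forall>j<2^m. (\<Sum>k<2^m. cnj (U k i) * U k j) = (if i = j then 1 else 0))"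

record ('d, 'k) query =
  qm :: nat
  qm1 :: nat
  qm2 :: nat
  qZ :: "nat set"
  qtau :: "nat \<Rightarrow> 'd"
  qbeta :: "'k \<Rightarrow> nat"

definition query_valid :: "('d, 'k) query \<Rightarrow> bool" where
  "query_valid Q \<longleftrightarrow> qm Q \<ge> 1 \<and> qm1 Q \<ge> 1 \<and> qm2 Q \<ge> 1 \<and> qm1 Q + qm2 Q \<le> qm Q
     \<and> qZ Q \<noteq> {} \<and> qZ Q \<subseteq> {..<2 ^ qm1 Q} \<and> (\<forall>k. qbeta Q k < 2 ^ qm2 Q)"

text \<open>Basis map of Q_f: |i>|x>|y> |-> |i>|x (+) beta(f(tau i))>|y> if i in Z, identity otherwise.
  With |b> big-endian, i = b div 2^(m-m'), x = (b div 2^r) mod 2^m'', y = b mod 2^r,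
  where r = m - m' - m''.\<close>
definition query_map :: "('d, 'k) query \<Rightarrow> ('d \<Rightarrow> 'k) \<Rightarrow> nat \<Rightarrow> nat" where
  "query_map Q f b =
     (let m = qm Q; m1 = qm1 Q; m2 = qm2 Q; r = m - m1 - m2;
          i = b div 2 ^ (m - m1); x = (b div 2 ^ r) mod 2 ^ m2; y = b mod 2 ^ r
      in if i \<in> qZ Q then i * 2 ^ (m - m1) + ((x + qbeta Q (f (qtau Q i))) mod 2 ^ m2) * 2 ^ r + y
         else b)"

definition query_op :: "('d, 'k) query \<Rightarrow> ('d \<Rightarrow> 'k) \<Rightarrow> cmat" where
  "query_op Q f = (\<lambda>a b. if a = query_map Q f b then 1 else 0)"

record ('d, 'k) nmalg =
  nquery :: "('d, 'k) query"
  nops :: "cmat list"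

definition nmalg_valid :: "('d, 'k) nmalg \<Rightarrow> bool" where
  "nmalg_valid A \<longleftrightarrow> query_valid (nquery A) \<and> nops A \<noteq> []
     \<and> (\<forall>U \<in> set (nops A). unitary_op (qm (nquery A)) U)"

definition nmalg_m :: "('d, 'k) nmalg \<Rightarrow> nat" where
  "nmalg_m A = qm (nquery A)"

definition nmalg_nq :: "('d, 'k) nmalg \<Rightarrow> nat" where
  "nmalg_nq A = length (nops A) - 1"

fun run_ops :: "nat \<Rightarrow> cmat \<Rightarrow> cmat \<Rightarrow> cmat list \<Rightarrow> cmat" where
  "run_ops m Qf M [] = M"
| "run_ops m Qf M (U # Us) = run_ops m Qf (mmul m U (mmul m Qf M)) Us"

definition nmalg_op :: "('d, 'k) nmalg \<Rightarrow> ('d \<Rightarrow> 'k) \<Rightarrow> cmat" where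
  "nmalg_op A f = run_ops (nmalg_m A) (query_op (nquery A) f) (hd (nops A)) (tl (nops A))"

text \<open>Quantum algorithm from F to G with k measurements:
  steps = [(A_0, b_0), ..., (A_{k-1}, b_{k-1})], where b_l is applied to the list of the
  previous outcomes [x_0, ..., x_{l-1}] (so b_0 is the constant b_0 []), and phi.\<close>
record ('d, 'k, 'g) qalg =
  qsteps :: "(('d, 'k) nmalg \<times> (nat list \<Rightarrow> nat)) list"
  qphi :: "nat list \<Rightarrow> 'g"

definition qalg_k :: "('d, 'k, 'g) qalg \<Rightarrow> nat" where
  "qalg_k A = length (qsteps A)"

definition qalg_mm :: "('d, 'k, 'g) qalg \<Rightarrow> nat \<Rightarrow> nat" where
  "qalg_mm A l = nmalg_m (fst (qsteps A ! l))"

definition outcomes :: "('d, 'k, 'g) qalg \<Rightarrow> nat \<Rightarrow> nat list set" where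
  "outcomes A l = {xs. length xs = l \<and> (\<forall>i<l. xs ! i < 2 ^ qalg_mm A i)}"

definition qalg_valid :: "('d, 'k, 'g) qalg \<Rightarrow> bool" where
  "qalg_valid A \<longleftrightarrow> qalg_k A \<ge> 1
     \<and> (\<forall>l<qalg_k A. nmalg_valid (fst (qsteps A ! l)))
     \<and> (\<forall>l<qalg_k A. \<forall>xs \<in> outcomes A l. snd (qsteps A ! l) xs < 2 ^ qalg_mm A l)"

definition qalg_nq :: "('d, 'k, 'g) qalg \<Rightarrow> nat" where
  "qalg_nq A = (\<Sum>l<qalg_k A. nmalg_nq (fst (qsteps A ! l)))"

definition outcome_prob :: "('d, 'k, 'g) qalg \<Rightarrow> ('d \<Rightarrow> 'k) \<Rightarrow> nat list \<Rightarrow> real" where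
  "outcome_prob A f xs =
     (\<Prod>l<qalg_k A. (cmod (nmalg_op (fst (qsteps A ! l)) f (xs ! l) (snd (qsteps A ! l) (take l xs))))\<^sup>2)"

text \<open>The output A(f) as a (finitely supported) probability measure on G, given on all subsets C.\<close>
definition qalg_out :: "('d, 'k, 'g) qalg \<Rightarrow> ('d \<Rightarrow> 'k) \<Rightarrow> 'g set \<Rightarrow> real" where
  "qalg_out A f C = (\<Sum>xs \<in> outcomes A (qalg_k A). if qphi A xs \<in> C then outcome_prob A f xs else 0)"

definition err_pt :: "(('d \<Rightarrow> 'k) \<Rightarrow> 'g::real_normed_vector) \<Rightarrow> ('d, 'k, 'g) qalg \<Rightarrow> ('d \<Rightarrow> 'k) \<Rightarrow> real \<Rightarrow> ereal" where
  "err_pt S A f \<theta> = Inf {ereal \<epsilon> | \<epsilon>. \<epsilon> \<ge> 0 \<and> qalg_out A f {\<zeta>. norm (S f - \<zeta>) > \<epsilon>} \<le> \<theta>}"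

definition err :: "(('d \<Rightarrow> 'k) \<Rightarrow> 'g::real_normed_vector) \<Rightarrow> ('d, 'k, 'g) qalg \<Rightarrow> ('d \<Rightarrow> 'k) set \<Rightarrow> real \<Rightarrow> ereal" where
  "err S A F \<theta> = (SUP f\<in>F. err_pt S A f \<theta>)"

definition eq_theta :: "nat \<Rightarrow> (('d \<Rightarrow> 'k) \<Rightarrow> 'g::real_normed_vector) \<Rightarrow> ('d \<Rightarrow> 'k) set \<Rightarrow> real \<Rightarrow> ereal" where
  "eq_theta n S F \<theta> = (INF A \<in> {A :: ('d, 'k, 'g) qalg. qalg_valid A \<and> qalg_nq A \<le> n}. err S A F \<theta>)"

definition qerr :: "nat \<Rightarrow> (('d \<Rightarrow> 'k) \<Rightarrow> 'g::real_normed_vector) \<Rightarrow> ('d \<Rightarrow> 'k) set \<Rightarrow> ereal" where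
  "qerr n S F = eq_theta n S F (1/4)"

end

theory Submission
  imports Defs
begin

text \<open>A query to \<open>\<Gamma>(f)\<close> is simulated by \<open>2\<kappa>\<close> queries to \<open>f\<close> on a register enlarged by a
  counter \<open>g\<close> and \<open>\<kappa>\<close> ancilla registers of \<open>m\<^sup>*\<close> bits. Querying \<open>f\<close> at \<open>\<eta>\<^sub>g(s)\<close>, for the
  index \<open>s\<close> of the simulated query, \<open>\<kappa>\<close> times, with basis permutations in between that advance
  \<open>g\<close> and rotate the ancillas, writes all values \<open>\<beta>(f(\<eta>\<^sub>j(s)))\<close> into the ancillas; a basis
  permutation then adds to the target register what a query to \<open>\<Gamma>(f)\<close> would add, computed by
  \<open>\<rho>\<close> from these values, and \<open>\<kappa>\<close> more queries erase the ancillas again. As every step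
  permutes basis states, the resulting algorithm restricted to the states with zero ancillas is
  the original one run on \<open>\<Gamma>(f)\<close>, while no amplitude leaves that subspace; hence both have the
  same output distribution, and the error bound follows by taking infima.\<close>

section \<open>Permutation matrices\<close>

definition perm_mat :: "(nat \<Rightarrow> nat) \<Rightarrow> cmat" where
  "perm_mat p = (\<lambda>a b. if a = p b then 1 else 0)"

lemma query_op_eq_perm_mat: "query_op Q f = perm_mat (query_map Q f)"
  by (simp add: query_op_def perm_mat_def)

lemma mmul_perm_mat: "mmul M (perm_mat p) X a c = (\<Sum>k<2^M. if a = p k then X k c else 0)"
  unfolding mmul_def perm_mat_def by (intro sum.cong) auto

lemma mmul_perm_mat_perm_mat:
  assumes "\<forall>n<2^M. \<pi> n < (2::nat)^M"
  shows "mmul M (perm_mat p) (mmul M (perm_mat \<pi>) X) = mmul M (perm_mat (p \<circ> \<pi>)) X"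
proof (intro ext)
  fix a c
  have "mmul M (perm_mat p) (mmul M (perm_mat \<pi>) X) a c
      = (\<Sum>k<2^M. \<Sum>l<2^M. if a = p k \<and> k = \<pi> l then X l c else 0)"
    unfolding mmul_perm_mat by (intro sum.cong) (auto simp: sum.If_cases)
  also have "\<dots> = (\<Sum>l<2^M. \<Sum>k<2^M. if a = p k \<and> k = \<pi> l then X l c else 0)"
    by (rule sum.swap)
  also have "\<dots> = (\<Sum>l<2^M. if a = p (\<pi> l) then X l c else 0)"
  proof (intro sum.cong refl)
    fix l assume "l \<in> {..<(2::nat)^M}"
    then have "\<pi> l \<in> {..<2^M}" using assms by simp
    have "(\<Sum>k<2^M. if a = p k \<and> k = \<pi> l then X l c else 0)
        = (\<Sum>k<2^M. if k = \<pi> l then (if a = p k then X l c else 0) else 0)"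
      by (intro sum.cong) auto
    with \<open>\<pi> l \<in> {..<2^M}\<close> show "(\<Sum>k<2^M. if a = p k \<and> k = \<pi> l then X l c else 0)
        = (if a = p (\<pi> l) then X l c else 0)"
      by (simp add: sum.delta')
  qed
  finally show "mmul M (perm_mat p) (mmul M (perm_mat \<pi>) X) a c = mmul M (perm_mat (p \<circ> \<pi>)) X a c"
    by (simp add: mmul_perm_mat)
qed

lemma unitary_perm_mat:
  assumes "\<forall>n<2^M. p n < (2::nat)^M" and "inj_on p {..<2^M}"
  shows "unitary_op M (perm_mat p)"
  unfolding unitary_op_def
proof (intro allI impI)
  fix i j :: nat assume ij: "i < 2^M" "j < 2^M"
  have "(\<Sum>k<2^M. cnj (perm_mat p k i) * perm_mat p k j)
      = (\<Sum>k<2^M. if k = p i then (if p i = p j then 1 else 0) else 0)"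
    unfolding perm_mat_def by (intro sum.cong) auto
  also have "\<dots> = (if i = j then 1 else 0)"
    using assms ij by (auto simp: sum.delta' inj_on_def)
  finally show "(\<Sum>k<2^M. cnj (perm_mat p k i) * perm_mat p k j) = (if i = j then 1 else 0)" .
qed

fun alternate :: "('a \<Rightarrow> 'a) \<Rightarrow> ('a \<Rightarrow> 'a) list \<Rightarrow> 'a \<Rightarrow> 'a" where
  "alternate q [] = id"
| "alternate q (p # ps) = alternate q ps \<circ> p \<circ> q"

lemma alternate_append: "alternate q (ps @ ps') = alternate q ps' \<circ> alternate q ps"
  by (induction ps) auto

lemma alternate_replicate: "alternate q (replicate n p) = (p \<circ> q) ^^ n"
  by (induction n) (simp_all add: funpow_Suc_right comp_assoc del: funpow.simps)

lemma alternate_lt: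
  assumes "\<forall>n<b. q n < (b::nat)" and "\<forall>p\<in>set ps. \<forall>n<b. p n < b"
  shows "\<forall>n<b. alternate q ps n < b"
  using assms(2) by (induction ps) (auto simp: assms(1))

lemma alternate_semiconj:
  assumes "\<forall>L. P L \<longrightarrow> q (E L) = E (Q L) \<and> P (Q L)"
    and "\<forall>T\<in>set Ts. \<forall>L. P L \<longrightarrow> h T (E L) = E (T L) \<and> P (T L)"
    and "P L"
  shows "alternate q (map h Ts) (E L) = E (alternate Q Ts L) \<and> P (alternate Q Ts L)"
  using assms(2,3) by (induction Ts arbitrary: L) (auto simp: assms(1))

lemma run_ops_append: "run_ops m Qf X (Us @ Vs) = run_ops m Qf (run_ops m Qf X Us) Vs"
  by (induction Us arbitrary: X) auto

lemma run_ops_perm_mats: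
  assumes q: "\<forall>n<2^M. q n < (2::nat)^M" and ps: "\<forall>p\<in>set ps. \<forall>n<2^M. p n < (2::nat)^M"
    and "ps \<noteq> []"
  shows "run_ops M (perm_mat q) X (map perm_mat ps) = mmul M (perm_mat (alternate q ps)) X"
proof -
  have gen: "run_ops M (perm_mat q) (mmul M (perm_mat \<pi>) X) (map perm_mat ps')
      = mmul M (perm_mat (alternate q ps' \<circ> \<pi>)) X"
    if "set ps' \<subseteq> set ps" "\<forall>n<2^M. \<pi> n < (2::nat)^M" for ps' \<pi>
    using that
  proof (induction ps' arbitrary: \<pi>)
    case (Cons p ps')
    have p: "\<forall>n<2^M. p n < (2::nat)^M" using Cons.prems(1) ps by auto
    have "mmul M (perm_mat p) (mmul M (perm_mat q) (mmul M (perm_mat \<pi>) X))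
        = mmul M (perm_mat (p \<circ> q \<circ> \<pi>)) X"
      using Cons.prems(2) q by (simp add: mmul_perm_mat_perm_mat comp_assoc)
    moreover have "\<forall>n<2^M. (p \<circ> q \<circ> \<pi>) n < (2::nat)^M" using Cons.prems(2) p q by simp
    ultimately show ?case using Cons by (simp add: comp_assoc)
  qed simp
  obtain p ps' where ps': "ps = p # ps'" using assms(3) by (cases ps) auto
  then have "mmul M (perm_mat p) (mmul M (perm_mat q) X) = mmul M (perm_mat (p \<circ> q)) X"
    using q by (simp add: mmul_perm_mat_perm_mat)
  moreover have "\<forall>n<2^M. (p \<circ> q) n < (2::nat)^M" using ps ps' q by simp
  ultimately show ?thesis using gen[of ps' "p \<circ> q"] ps' by (simp add: comp_assoc subset_insertI)
qed

section \<open>Embedding a register into a larger one\<close>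

definition ext_mat :: "nat \<Rightarrow> (nat \<Rightarrow> nat) \<Rightarrow> (nat \<Rightarrow> nat) \<Rightarrow> cmat \<Rightarrow> cmat" where
  "ext_mat m emb unemb U = (\<lambda>a c.
     if a \<in> emb ` {..<2^m} \<and> c \<in> emb ` {..<2^m} then U (unemb a) (unemb c)
     else if a = c then 1 else 0)"

definition lifts :: "nat \<Rightarrow> nat \<Rightarrow> (nat \<Rightarrow> nat) \<Rightarrow> cmat \<Rightarrow> cmat \<Rightarrow> bool" where
  "lifts m M emb X Xt \<longleftrightarrow> (\<forall>x<2^m. \<forall>b<2^m. X (emb x) (emb b) = Xt x b)
     \<and> (\<forall>a<2^M. a \<notin> emb ` {..<2^m} \<longrightarrow> (\<forall>b<2^m. X a (emb b) = 0))"

locale register_embedding =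
  fixes m M :: nat and emb unemb :: "nat \<Rightarrow> nat"
  assumes emb_lt: "\<And>y. y < 2^m \<Longrightarrow> emb y < 2^M"
    and unemb_emb: "\<And>y. y < 2^m \<Longrightarrow> unemb (emb y) = y"
    and unemb_lt: "\<And>n. unemb n < 2^m"
begin

lemma emb_eq_iff: "x < 2^m \<Longrightarrow> y < 2^m \<Longrightarrow> emb x = emb y \<longleftrightarrow> x = y"
  by (metis unemb_emb)

lemma sum_emb:
  fixes F :: "nat \<Rightarrow> 'a::comm_monoid_add"
  assumes "\<And>k. k < 2^M \<Longrightarrow> k \<notin> emb ` {..<2^m} \<Longrightarrow> F k = 0"
  shows "(\<Sum>k<2^M. F k) = (\<Sum>y<2^m. F (emb y))"
proof -
  have "(\<Sum>k<2^M. F k) = (\<Sum>k\<in>emb ` {..<2^m}. F k)"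
    using emb_lt assms by (intro sum.mono_neutral_right) auto
  also have "\<dots> = (\<Sum>y<2^m. F (emb y))"
    using emb_eq_iff by (subst sum.reindex) (auto intro: inj_onI)
  finally show ?thesis .
qed

lemma ext_mat_emb: "x < 2^m \<Longrightarrow> y < 2^m \<Longrightarrow> ext_mat m emb unemb U (emb x) (emb y) = U x y"
  unfolding ext_mat_def by (auto simp: unemb_emb)

lemma ext_mat_outside:
  "a \<notin> emb ` {..<2^m} \<or> c \<notin> emb ` {..<2^m} \<Longrightarrow> ext_mat m emb unemb U a c = (if a = c then 1 else 0)"
  unfolding ext_mat_def by auto

lemma unitary_ext_mat:
  assumes U: "unitary_op m U"
  shows "unitary_op M (ext_mat m emb unemb U)"
  unfolding unitary_op_def
proof (intro allI impI)
  fix i j :: nat assume ij: "i < 2^M" "j < 2^M"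
  let ?E = "ext_mat m emb unemb U"
  let ?R = "emb ` {..<2^m}"
  show "(\<Sum>k<2^M. cnj (?E k i) * ?E k j) = (if i = j then 1 else 0)"
  proof (cases "i \<in> ?R \<and> j \<in> ?R")
    case True
    then obtain i' j' where i'j': "i' < 2^m" "i = emb i'" "j' < 2^m" "j = emb j'" by auto
    have "(\<Sum>k<2^M. cnj (?E k i) * ?E k j) = (\<Sum>y<2^m. cnj (?E (emb y) i) * ?E (emb y) j)"
      using True by (intro sum_emb) (auto simp: ext_mat_outside)
    also have "\<dots> = (\<Sum>y<2^m. cnj (U y i') * U y j')"
      using i'j' by (intro sum.cong) (auto simp: ext_mat_emb)
    also have "\<dots> = (if i = j then 1 else 0)"
      using U i'j' emb_eq_iff unfolding unitary_op_def by auto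
    finally show ?thesis .
  next
    case False
    then have "cnj (?E k i) * ?E k j = (if k = i \<and> i = j then 1 else 0)" for k
      by (cases "k = i"; cases "k = j") (auto simp: ext_mat_outside)
    then show ?thesis using ij by (simp add: sum.delta')
  qed
qed

lemma lifts_ext_mat: "lifts m M emb (ext_mat m emb unemb U) U"
  unfolding lifts_def by (auto simp: ext_mat_emb ext_mat_outside)

lemma lifts_mmul_ext_mat:
  assumes "lifts m M emb X Xt"
  shows "lifts m M emb (mmul M (ext_mat m emb unemb U) X) (mmul m U Xt)"
proof -
  have col: "mmul M (ext_mat m emb unemb U) X a (emb b)
      = (\<Sum>y<2^m. ext_mat m emb unemb U a (emb y) * Xt y b)" if "b < 2^m" for a b
  proof -
    have "mmul M (ext_mat m emb unemb U) X a (emb b)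
        = (\<Sum>y<2^m. ext_mat m emb unemb U a (emb y) * X (emb y) (emb b))"
      unfolding mmul_def using assms that unfolding lifts_def by (intro sum_emb) auto
    then show ?thesis using assms that unfolding lifts_def by simp
  qed
  show ?thesis
    unfolding lifts_def
  proof (intro conjI allI impI)
    fix x b :: nat assume "x < 2^m" "b < 2^m"
    then show "mmul M (ext_mat m emb unemb U) X (emb x) (emb b) = mmul m U Xt x b"
      by (simp add: col ext_mat_emb) (simp add: mmul_def)
  next
    fix a b :: nat assume "a \<notin> emb ` {..<2^m}" "b < 2^m"
    then show "mmul M (ext_mat m emb unemb U) X a (emb b) = 0"
      by (simp add: col ext_mat_outside) (intro sum.neutral ballI, auto)
  qed
qed

lemma lifts_mmul_perm_mat:
  assumes "lifts m M emb X Xt" and "\<forall>n<2^M. \<pi> n < (2::nat)^M"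
    and "\<forall>y<2^m. \<pi> (emb y) = emb (\<sigma> y)" and "\<forall>y<2^m. \<sigma> y < (2::nat)^m"
  shows "lifts m M emb (mmul M (perm_mat \<pi>) X) (mmul m (perm_mat \<sigma>) Xt)"
proof -
  have col: "mmul M (perm_mat \<pi>) X a (emb b) = (\<Sum>y<2^m. if a = emb (\<sigma> y) then Xt y b else 0)"
    if "b < 2^m" for a b
  proof -
    have "mmul M (perm_mat \<pi>) X a (emb b) = (\<Sum>y<2^m. if a = \<pi> (emb y) then X (emb y) (emb b) else 0)"
      unfolding mmul_perm_mat using assms that unfolding lifts_def by (intro sum_emb) auto
    then show ?thesis using assms that unfolding lifts_def by (auto intro!: sum.cong)
  qed
  have "(\<Sum>y<2^m. if emb x = emb (\<sigma> y) then Xt y b else 0) = (\<Sum>y<2^m. if x = \<sigma> y then Xt y b else 0)"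
    if "x < 2^m" for x b
    using that assms(4) emb_eq_iff by (intro sum.cong) auto
  then show ?thesis
    unfolding lifts_def using col assms(4)
    by (auto simp: mmul_perm_mat intro!: sum.neutral)
qed

end

section \<open>Bit strings and queries\<close>

lemma concat_bits_lt:
  fixes h l :: nat
  assumes "h < 2^a" and "l < 2^b"
  shows "h * 2^b + l < 2^(a+b)"
proof -
  have "h * 2^b + l < (h + 1) * 2^b" using assms(2) by simp
  also have "\<dots> \<le> 2^a * 2^b" using assms(1) by (intro mult_le_mono1) simp
  finally show ?thesis by (simp add: power_add)
qed

lemma mult_add_eq_mult_add_iff:
  fixes x y a b d :: nat
  assumes "a < d" and "b < d"
  shows "x * d + a = y * d + b \<longleftrightarrow> x = y \<and> a = b"
proof
  assume eq: "x * d + a = y * d + b"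
  have "x = (x * d + a) div d" "y = (y * d + b) div d" using assms by simp_all
  moreover have "a = (x * d + a) mod d" "b = (y * d + b) mod d" using assms by simp_all
  ultimately show "x = y \<and> a = b" using eq by metis
qed simp

lemma inj_on_add_mod: "inj_on (\<lambda>x. (x + c) mod N) {..<N::nat}"
proof -
  have "a = b" if "a \<le> b" "b < N" "(a + c) mod N = (b + c) mod N" for a b
  proof -
    have "N dvd (b + c) - (a + c)" using that by (subst mod_eq_dvd_iff_nat[symmetric]) auto
    then show ?thesis using that by (auto dest: dvd_imp_le)
  qed
  then show ?thesis by (intro inj_onI) (metis lessThan_iff linorder_le_cases)
qed

fun from_digits :: "nat \<Rightarrow> nat list \<Rightarrow> nat" where
  "from_digits w [] = 0"
| "from_digits w (a # as) = a * 2^(w * length as) + from_digits w as"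

fun to_digits :: "nat \<Rightarrow> nat \<Rightarrow> nat \<Rightarrow> nat list" where
  "to_digits w 0 n = []"
| "to_digits w (Suc k) n = (n div 2^(w*k)) mod 2^w # to_digits w k (n mod 2^(w*k))"

lemma from_digits_lt: "\<forall>a\<in>set as. a < 2^w \<Longrightarrow> from_digits w as < 2^(w * length as)"
proof (induction as)
  case (Cons a as)
  then have "a * 2^(w * length as) + from_digits w as < 2^(w + w * length as)"
    by (intro concat_bits_lt) auto
  then show ?case by (simp add: add.commute)
qed simp

lemma to_digits_from_digits: "\<forall>a\<in>set as. a < 2^w \<Longrightarrow> to_digits w (length as) (from_digits w as) = as"
  by (induction as) (auto simp: from_digits_lt)

lemma length_to_digits [simp]: "length (to_digits w k n) = k"
  by (induction k arbitrary: n) auto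

lemma to_digits_lt: "\<forall>a\<in>set (to_digits w k n). a < 2^w"
  by (induction k arbitrary: n) auto

lemma from_digits_to_digits: "n < 2^(w*k) \<Longrightarrow> from_digits w (to_digits w k n) = n"
proof (induction k arbitrary: n)
  case (Suc k)
  then have "n div 2^(w*k) < 2^w"
    by (simp add: div_less_iff_less_mult power_add[symmetric] add.commute)
  then show ?case using Suc by (simp add: div_mult_mod_eq)
qed simp

definition add_target :: "('d, 'k) query \<Rightarrow> nat \<Rightarrow> nat \<Rightarrow> nat" where
  "add_target Q c u = (let r = qm Q - qm1 Q - qm2 Q in ((u div 2^r + c) mod 2^qm2 Q) * 2^r + u mod 2^r)"

context
  fixes Q :: "('d, 'k) query"
  assumes Q: "query_valid Q"
begin

private abbreviation "r \<equiv> qm Q - qm1 Q - qm2 Q"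

private lemma width_split: "2 ^ (qm Q - qm1 Q) = (2::nat) ^ qm2 Q * 2 ^ r"
  using Q by (simp add: query_valid_def power_add[symmetric])

lemma add_target_split:
  assumes "x < 2^qm2 Q" and "y < 2^r"
  shows "add_target Q c (x * 2^r + y) = ((x + c) mod 2^qm2 Q) * 2^r + y"
  using assms by (simp add: add_target_def Let_def)

lemma add_target_lt:
  assumes "u < 2^(qm Q - qm1 Q)"
  shows "add_target Q c u < 2^(qm Q - qm1 Q)"
proof -
  have "add_target Q c u = ((u div 2^r + c) mod 2^qm2 Q) * 2^r + u mod 2^r"
    by (simp add: add_target_def Let_def)
  also have "\<dots> < 2^(qm2 Q + r)" by (intro concat_bits_lt) auto
  finally show ?thesis by (simp only: width_split power_add)
qed

lemma inj_on_add_target: "inj_on (add_target Q c) {..<2^(qm Q - qm1 Q)}"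
proof (rule inj_onI)
  fix u v assume "u \<in> {..<2^(qm Q - qm1 Q)}" "v \<in> {..<2^(qm Q - qm1 Q)}"
    and eq: "add_target Q c u = add_target Q c v"
  then have "u div 2^r < 2^qm2 Q" "v div 2^r < 2^qm2 Q"
    by (simp_all add: width_split div_less_iff_less_mult)
  moreover have "(u div 2^r + c) mod 2^qm2 Q = (v div 2^r + c) mod 2^qm2 Q \<and> u mod 2^r = v mod 2^r"
    using eq by (simp add: add_target_def Let_def mult_add_eq_mult_add_iff)
  ultimately have "u div 2^r = v div 2^r \<and> u mod 2^r = v mod 2^r"
    using inj_onD[OF inj_on_add_mod] by blast
  then show "u = v" by (metis div_mult_mod_eq)
qed

lemma query_map_split:
  assumes "u < 2^(qm Q - qm1 Q)"
  shows "query_map Q f (i * 2^(qm Q - qm1 Q) + u)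
    = i * 2^(qm Q - qm1 Q) + (if i \<in> qZ Q then add_target Q (qbeta Q (f (qtau Q i))) u else u)"
proof -
  have "(i * 2^(qm Q - qm1 Q) + u) div 2^r = i * 2^qm2 Q + u div 2^r"
    by (simp add: width_split mult.assoc[symmetric])
  moreover have "u div 2^r < 2^qm2 Q"
    using assms by (simp add: width_split div_less_iff_less_mult)
  moreover have "(i * 2^(qm Q - qm1 Q) + u) mod 2^r = u mod 2^r"
    by (simp add: width_split mult.assoc[symmetric])
  ultimately show ?thesis
    using assms unfolding query_map_def add_target_def Let_def by (simp add: algebra_simps)
qed

lemma query_map_lt:
  assumes "b < 2^qm Q"
  shows "query_map Q f b < 2^qm Q"
proof -
  let ?w = "qm Q - qm1 Q"
  have m: "qm Q = qm1 Q + ?w" using Q by (simp add: query_valid_def)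
  have i: "b div 2^?w < 2^qm1 Q"
    using assms by (subst (asm) m) (simp add: div_less_iff_less_mult power_add)
  have "query_map Q f b = query_map Q f ((b div 2^?w) * 2^?w + b mod 2^?w)"
    by (simp only: div_mult_mod_eq)
  also have "\<dots> < 2^(qm1 Q + ?w)"
    by (subst query_map_split) (auto intro!: concat_bits_lt i add_target_lt)
  finally show ?thesis using m by simp
qed

end

section \<open>Encoding the registers of the simulation\<close>

text \<open>A basis state of the simulating algorithm is a tuple \<open>(g, t, as, u)\<close>: a counter \<open>g\<close>
  of \<open>\<kappa>\<close> bits, the index \<open>t\<close> of the simulated query, \<open>\<kappa>\<close> registers \<open>as\<close> of \<open>m\<^sup>*\<close> bits
  collecting the values \<open>\<beta>(f(\<eta>\<^sub>j(\<tau> t)))\<close>, and the remaining bits \<open>u\<close> of the simulated basis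
  state.\<close>

type_synonym sim_state = "nat \<times> nat \<times> nat list \<times> nat"

locale state_code =
  fixes \<kappa> ms m1 w :: nat
begin

definition state_ok :: "sim_state \<Rightarrow> bool" where
  "state_ok = (\<lambda>(g, t, as, u). g < 2^\<kappa> \<and> t < 2^m1 \<and> length as = \<kappa> \<and> (\<forall>a\<in>set as. a < 2^ms) \<and> u < 2^w)"

definition encode :: "sim_state \<Rightarrow> nat" where
  "encode = (\<lambda>(g, t, as, u). ((g * 2^m1 + t) * 2^(ms*\<kappa>) + from_digits ms as) * 2^w + u)"

definition decode :: "nat \<Rightarrow> sim_state" where
  "decode n = (let n1 = n div 2^w; n2 = n1 div 2^(ms*\<kappa>)
     in (n2 div 2^m1, n2 mod 2^m1, to_digits ms \<kappa> (n1 mod 2^(ms*\<kappa>)), n mod 2^w))"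

abbreviation width :: nat where
  "width \<equiv> \<kappa> + m1 + ms*\<kappa> + w"

lemma encode_lt: "state_ok L \<Longrightarrow> encode L < 2^width"
  by (cases L) (auto simp: state_ok_def encode_def intro!: concat_bits_lt from_digits_lt)

lemma decode_encode: "state_ok L \<Longrightarrow> decode (encode L) = L"
  by (cases L) (auto simp: state_ok_def encode_def decode_def from_digits_lt to_digits_from_digits)

lemma state_ok_decode: "n < 2^width \<Longrightarrow> state_ok (decode n)"
  by (simp add: state_ok_def decode_def to_digits_lt div_less_iff_less_mult
      div_mult2_eq[symmetric] power_add[symmetric] ac_simps)

lemma encode_decode: "n < 2^width \<Longrightarrow> encode (decode n) = n"
  by (simp add: encode_def decode_def Let_def from_digits_to_digits div_mult_mod_eq)

definition basis_map :: "(sim_state \<Rightarrow> sim_state) \<Rightarrow> nat \<Rightarrow> nat" where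
  "basis_map T = encode \<circ> T \<circ> decode"

lemma basis_map_encode: "state_ok L \<Longrightarrow> basis_map T (encode L) = encode (T L)"
  by (simp add: basis_map_def decode_encode)

context
  fixes T :: "sim_state \<Rightarrow> sim_state"
  assumes T_ok: "\<And>L. state_ok L \<Longrightarrow> state_ok (T L)"
begin

lemma basis_map_lt: "\<forall>n<2^width. basis_map T n < 2^width"
  by (simp add: basis_map_def T_ok state_ok_decode encode_lt)

lemma inj_on_basis_map:
  assumes "inj_on T {L. state_ok L}"
  shows "inj_on (basis_map T) {..<2^width}"
proof (rule inj_onI)
  fix a b assume ab: "a \<in> {..<2^width}" "b \<in> {..<2^width}" and "basis_map T a = basis_map T b"
  then have "T (decode a) = T (decode b)"
    by (metis basis_map_def comp_apply decode_encode T_ok state_ok_decode lessThan_iff)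
  then have "decode a = decode b"
    using ab state_ok_decode by (auto dest: inj_onD[OF assms])
  then show "a = b" using ab by (metis encode_decode lessThan_iff)
qed

end

end

section \<open>Simulating one query\<close>

lemma mod_sub_mod_sub: "(a::nat) < N \<Longrightarrow> (N - (N - a) mod N) mod N = a"
  by (cases "a = 0") auto

lemma mod_sub_add_mod: "(a::nat) < N \<Longrightarrow> ((N - a) mod N + a) mod N = 0"
  by (cases "a = 0") auto

lemma inv_rotate1_snoc: "inv rotate1 (xs @ [x]) = x # xs"
  by (metis inv_f_f inj_rotate1 rotate1.simps(2))

lemma inv_rotate1_Cons: "inv rotate1 (a # xs) = last (a # xs) # butlast (a # xs)"
  by (metis append_butlast_last_id inv_rotate1_snoc list.distinct(1))

lemma rotate1_inv_rotate1: "rotate1 (inv rotate1 xs) = xs"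
  by (simp add: surj_f_inv_f surj_rotate1)

lemma length_inv_rotate1 [simp]: "length (inv rotate1 xs) = length xs"
  by (metis length_rotate1 rotate1_inv_rotate1)

lemma set_inv_rotate1 [simp]: "set (inv rotate1 xs) = set xs"
  by (metis set_rotate1 rotate1_inv_rotate1)

definition sim_query :: "nat \<Rightarrow> nat \<Rightarrow> (nat \<Rightarrow> 'dt \<Rightarrow> 'd) \<Rightarrow> ('k \<Rightarrow> nat) \<Rightarrow> ('dt, 'kt) query \<Rightarrow> ('d, 'k) query" where
  "sim_query \<kappa> ms \<eta> \<beta> Qt = \<lparr>qm = \<kappa> + qm1 Qt + ms*\<kappa> + (qm Qt - qm1 Qt), qm1 = \<kappa> + qm1 Qt, qm2 = ms,
     qZ = {g * 2^qm1 Qt + t | g t. g < \<kappa> \<and> t \<in> qZ Qt},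
     qtau = \<lambda>i. \<eta> (i div 2^qm1 Qt) (qtau Qt (i mod 2^qm1 Qt)), qbeta = \<beta>\<rparr>"

definition query_value :: "(nat \<Rightarrow> 'dt \<Rightarrow> 'd) \<Rightarrow> ('k \<Rightarrow> nat) \<Rightarrow> ('dt, 'kt) query \<Rightarrow> ('d \<Rightarrow> 'k) \<Rightarrow> nat \<Rightarrow> nat \<Rightarrow> nat" where
  "query_value \<eta> \<beta> Qt f t j = (if t \<in> qZ Qt then \<beta> (f (\<eta> j (qtau Qt t))) else 0)"

definition state_query :: "nat \<Rightarrow> nat \<Rightarrow> (nat \<Rightarrow> 'dt \<Rightarrow> 'd) \<Rightarrow> ('k \<Rightarrow> nat) \<Rightarrow> ('dt, 'kt) query
    \<Rightarrow> ('d \<Rightarrow> 'k) \<Rightarrow> sim_state \<Rightarrow> sim_state" where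
  "state_query \<kappa> ms \<eta> \<beta> Qt f = (\<lambda>(g, t, as, u).
     if g < \<kappa> then (g, t, ((hd as + query_value \<eta> \<beta> Qt f t g) mod 2^ms) # tl as, u) else (g, t, as, u))"

definition shift_fwd :: "nat \<Rightarrow> sim_state \<Rightarrow> sim_state" where
  "shift_fwd \<kappa> = (\<lambda>(g, t, as, u). ((g + 1) mod 2^\<kappa>, t, rotate1 as, u))"

definition shift_bwd :: "nat \<Rightarrow> sim_state \<Rightarrow> sim_state" where
  "shift_bwd \<kappa> = (\<lambda>(g, t, as, u). ((g + 2^\<kappa> - 1) mod 2^\<kappa>, t, inv rotate1 as, u))"

definition negate_head :: "nat \<Rightarrow> sim_state \<Rightarrow> sim_state" where
  "negate_head ms = (\<lambda>(g, t, as, u). (g, t, ((2^ms - hd as) mod 2^ms) # tl as, u))"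

definition apply_rho :: "('dt, 'kt) query \<Rightarrow> ('dt \<Rightarrow> nat list \<Rightarrow> 'kt) \<Rightarrow> sim_state \<Rightarrow> sim_state" where
  "apply_rho Qt \<rho> = (\<lambda>(g, t, as, u).
     (g, t, as, if t \<in> qZ Qt then add_target Qt (qbeta Qt (\<rho> (qtau Qt t) (rotate1 as))) u else u))"

text \<open>After the \<open>\<kappa>\<close>-th query, \<open>rotate1 as\<close> lists the values for \<open>j = 0, \<dots>, \<kappa> - 1\<close> in
  order; the erasing queries run through them backwards, each preceded by negating the register
  it is about to add to.\<close>

definition sim_steps :: "nat \<Rightarrow> nat \<Rightarrow> ('dt, 'kt) query \<Rightarrow> ('dt \<Rightarrow> nat list \<Rightarrow> 'kt) \<Rightarrow> (sim_state \<Rightarrow> sim_state) list" where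
  "sim_steps \<kappa> ms Qt \<rho> = replicate (\<kappa> - 1) (shift_fwd \<kappa>) @ (negate_head ms \<circ> apply_rho Qt \<rho>)
     # replicate (\<kappa> - 1) (negate_head ms \<circ> shift_bwd \<kappa>)"

definition embed_basis :: "nat \<Rightarrow> nat \<Rightarrow> ('dt, 'kt) query \<Rightarrow> nat \<Rightarrow> nat" where
  "embed_basis \<kappa> ms Qt y = state_code.encode \<kappa> ms (qm1 Qt) (qm Qt - qm1 Qt)
     (0, y div 2^(qm Qt - qm1 Qt), replicate \<kappa> 0, y mod 2^(qm Qt - qm1 Qt))"

definition unembed_basis :: "nat \<Rightarrow> nat \<Rightarrow> ('dt, 'kt) query \<Rightarrow> nat \<Rightarrow> nat" where
  "unembed_basis \<kappa> ms Qt n = (case state_code.decode \<kappa> ms (qm1 Qt) (qm Qt - qm1 Qt) n of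
     (g, t, as, u) \<Rightarrow> t * 2^(qm Qt - qm1 Qt) + u)"

definition sim_block :: "nat \<Rightarrow> nat \<Rightarrow> ('dt, 'kt) query \<Rightarrow> ('dt \<Rightarrow> nat list \<Rightarrow> 'kt) \<Rightarrow> cmat \<Rightarrow> cmat list" where
  "sim_block \<kappa> ms Qt \<rho> U =
     map (perm_mat \<circ> state_code.basis_map \<kappa> ms (qm1 Qt) (qm Qt - qm1 Qt)) (sim_steps \<kappa> ms Qt \<rho>)
     @ [ext_mat (qm Qt) (embed_basis \<kappa> ms Qt) (unembed_basis \<kappa> ms Qt) U]"

definition sim_nmalg :: "nat \<Rightarrow> nat \<Rightarrow> (nat \<Rightarrow> 'dt \<Rightarrow> 'd) \<Rightarrow> ('k \<Rightarrow> nat) \<Rightarrow> ('dt \<Rightarrow> nat list \<Rightarrow> 'kt)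
    \<Rightarrow> ('dt, 'kt) nmalg \<Rightarrow> ('d, 'k) nmalg" where
  "sim_nmalg \<kappa> ms \<eta> \<beta> \<rho> A = \<lparr>nquery = sim_query \<kappa> ms \<eta> \<beta> (nquery A),
     nops = ext_mat (qm (nquery A)) (embed_basis \<kappa> ms (nquery A)) (unembed_basis \<kappa> ms (nquery A)) (hd (nops A))
       # concat (map (sim_block \<kappa> ms (nquery A) \<rho>) (tl (nops A)))\<rparr>"

locale query_simulation =
  fixes \<kappa> ms :: nat and \<eta> :: "nat \<Rightarrow> 'dt \<Rightarrow> 'd" and \<beta> :: "'k \<Rightarrow> nat"
    and \<rho> :: "'dt \<Rightarrow> nat list \<Rightarrow> 'kt" and Qt :: "('dt, 'kt) query"
  assumes \<kappa>_pos: "\<kappa> \<ge> 1" and ms_pos: "ms \<ge> 1" and \<beta>_lt: "\<And>k. \<beta> k < 2^ms"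
    and Qt_valid: "query_valid Qt"
begin

sublocale state_code \<kappa> ms "qm1 Qt" "qm Qt - qm1 Qt" .

abbreviation "m1 \<equiv> qm1 Qt"
abbreviation "w \<equiv> qm Qt - qm1 Qt"
abbreviation "Q \<equiv> sim_query \<kappa> ms \<eta> \<beta> Qt"
abbreviation "v \<equiv> query_value \<eta> \<beta> Qt"
abbreviation "QL \<equiv> state_query \<kappa> ms \<eta> \<beta> Qt"
abbreviation "Ts \<equiv> sim_steps \<kappa> ms Qt \<rho>"
abbreviation "emb \<equiv> embed_basis \<kappa> ms Qt"
abbreviation "unemb \<equiv> unembed_basis \<kappa> ms Qt"

lemma qm_split: "qm Qt = m1 + w" and Zt_lt: "t \<in> qZ Qt \<Longrightarrow> t < 2^m1"
  using Qt_valid by (auto simp: query_valid_def)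

lemma query_value_lt: "v f t j < 2^ms"
  using \<beta>_lt by (simp add: query_value_def)

lemma sim_query_valid: "query_valid Q"
proof -
  obtain t where t: "t \<in> qZ Qt" using Qt_valid by (auto simp: query_valid_def)
  have "t \<in> qZ Q" using t \<kappa>_pos by (force simp: sim_query_def)
  moreover have "qZ Q \<subseteq> {..<2^(\<kappa> + m1)}"
  proof
    fix i assume "i \<in> qZ Q"
    then obtain g t where "i = g * 2^m1 + t" "g < \<kappa>" "t \<in> qZ Qt" by (auto simp: sim_query_def)
    moreover have "g < 2^\<kappa>" using \<open>g < \<kappa>\<close> less_exp less_trans by blast
    ultimately show "i \<in> {..<2^(\<kappa> + m1)}" using Zt_lt by (simp add: concat_bits_lt)
  qed
  moreover have "ms \<le> ms * \<kappa> + w" using \<kappa>_pos by (simp add: trans_le_add1)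
  ultimately show ?thesis using \<kappa>_pos ms_pos \<beta>_lt by (auto simp: query_valid_def sim_query_def)
qed

lemma mem_sim_query_Z: "t < 2^m1 \<Longrightarrow> g * 2^m1 + t \<in> qZ Q \<longleftrightarrow> g < \<kappa> \<and> t \<in> qZ Qt"
  using Zt_lt by (auto simp: sim_query_def mult_add_eq_mult_add_iff)

lemma encode_Cons:
  assumes "Suc (length as) = \<kappa>"
  shows "encode (g, t, a # as, u) = (g * 2^m1 + t) * 2^(qm Q - qm1 Q)
    + (a * 2^(qm Q - qm1 Q - qm2 Q) + (from_digits ms as * 2^w + u))"
  unfolding encode_def using assms[symmetric] by (simp add: sim_query_def algebra_simps power_add)

lemma state_okE:
  assumes "state_ok L"
  obtains g t a as u where "L = (g, t, a # as, u)" and "g < 2^\<kappa>" and "t < 2^m1"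
    and "Suc (length as) = \<kappa>" and "a < 2^ms" and "\<forall>b\<in>set as. b < 2^ms" and "u < 2^w"
proof -
  obtain g t as u where L: "L = (g, t, as, u)" by (cases L)
  moreover obtain a as' where "as = a # as'"
    using assms \<kappa>_pos L by (cases as) (auto simp: state_ok_def)
  ultimately show thesis using assms that by (auto simp: state_ok_def)
qed

lemma qtau_sim_query: "t < 2^m1 \<Longrightarrow> qtau Q (g * 2^m1 + t) = \<eta> g (qtau Qt t)"
  by (simp add: sim_query_def)

lemma query_map_encode:
  assumes "state_ok L"
  shows "query_map Q f (encode L) = encode (QL f L)"
proof -
  obtain g t a as u where L: "L = (g, t, a # as, u)" and len: "Suc (length as) = \<kappa>"
    and a: "a < 2^ms" and t: "t < 2^m1" and u: "u < 2^w" and as: "\<forall>b\<in>set as. b < 2^ms"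
    using assms by (rule state_okE)
  let ?i = "g * 2^m1 + t" and ?R = "qm Q - qm1 Q - qm2 Q" and ?rest = "from_digits ms as * 2^w + u"
  have rest: "?rest < 2^?R"
    using len from_digits_lt[OF as] u by (auto simp: sim_query_def intro!: concat_bits_lt)
  have "qm Q - qm1 Q = qm2 Q + ?R"
    using len by (auto simp: sim_query_def)
  then have below: "a * 2^?R + ?rest < 2^(qm Q - qm1 Q)"
    using concat_bits_lt[OF a rest] by (simp add: sim_query_def)
  have "query_map Q f (encode L)
      = ?i * 2^(qm Q - qm1 Q) + (if ?i \<in> qZ Q then add_target Q (qbeta Q (f (qtau Q ?i))) (a * 2^?R + ?rest)
          else a * 2^?R + ?rest)"
    unfolding L encode_Cons[OF len] by (rule query_map_split[OF sim_query_valid below])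
  also have "\<dots> = ?i * 2^(qm Q - qm1 Q) + ((if g < \<kappa> then (a + v f t g) mod 2^ms else a) * 2^?R + ?rest)"
  proof (cases "g < \<kappa> \<and> t \<in> qZ Qt")
    case True
    have "a < 2^qm2 Q" using a by (simp add: sim_query_def)
    with True show ?thesis using mem_sim_query_Z[OF t] add_target_split[OF sim_query_valid _ rest]
      by (simp add: qtau_sim_query[OF t] query_value_def) (simp add: sim_query_def)
  qed (use mem_sim_query_Z[OF t] a in \<open>auto simp: query_value_def\<close>)
  also have "\<dots> = encode (QL f L)"
    unfolding L using encode_Cons[OF len] by (simp add: state_query_def)
  finally show ?thesis .
qed

lemma state_query_ok: "state_ok L \<Longrightarrow> state_ok (QL f L)"
  using query_value_lt by (elim state_okE) (auto simp: state_query_def state_ok_def)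

lemma shift_fwd_ok: "state_ok L \<Longrightarrow> state_ok (shift_fwd \<kappa> L)"
  by (cases L) (auto simp: shift_fwd_def state_ok_def)

lemma shift_bwd_ok: "state_ok L \<Longrightarrow> state_ok (shift_bwd \<kappa> L)"
  by (cases L) (auto simp: shift_bwd_def state_ok_def)

lemma shift_bwd_shift_fwd: "state_ok L \<Longrightarrow> shift_bwd \<kappa> (shift_fwd \<kappa> L) = L"
proof (cases L)
  case (fields g t as u)
  assume "state_ok L"
  then have "((g + 1) mod 2^\<kappa> + 2^\<kappa> - 1) mod 2^\<kappa> = g"
    using fields by (cases "g + 1 = 2^\<kappa>") (auto simp: state_ok_def)
  then show ?thesis
    using fields by (simp add: shift_fwd_def shift_bwd_def inv_f_f[OF inj_rotate1])
qed

lemma shift_fwd_shift_bwd: "state_ok L \<Longrightarrow> shift_fwd \<kappa> (shift_bwd \<kappa> L) = L"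
proof (cases L)
  case (fields g t as u)
  assume "state_ok L"
  then have "((g + 2^\<kappa> - 1) mod 2^\<kappa> + 1) mod 2^\<kappa> = g"
    using fields by (cases "g = 0") (auto simp: state_ok_def mod_if)
  then show ?thesis
    using fields by (simp add: shift_fwd_def shift_bwd_def rotate1_inv_rotate1)
qed

lemma negate_head_ok: "state_ok L \<Longrightarrow> state_ok (negate_head ms L)"
  by (elim state_okE) (auto simp: negate_head_def state_ok_def)

lemma negate_head_negate_head: "state_ok L \<Longrightarrow> negate_head ms (negate_head ms L) = L"
  by (elim state_okE) (simp add: negate_head_def mod_sub_mod_sub)

lemma apply_rho_ok: "state_ok L \<Longrightarrow> state_ok (apply_rho Qt \<rho> L)"
  by (cases L) (auto simp: apply_rho_def state_ok_def add_target_lt[OF Qt_valid])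

lemma inj_on_apply_rho: "inj_on (apply_rho Qt \<rho>) {L. state_ok L}"
  by (intro inj_onI, clarsimp simp: apply_rho_def state_ok_def split: if_splits)
    (auto dest: inj_onD[OF inj_on_add_target[OF Qt_valid]])

lemma sim_steps_ok_inj:
  assumes "T \<in> set Ts"
  shows "(\<forall>L. state_ok L \<longrightarrow> state_ok (T L)) \<and> inj_on T {L. state_ok L}"
proof -
  have inj_neg: "inj_on (negate_head ms) {L. state_ok L}"
    by (rule inj_on_inverseI[where g = "negate_head ms"]) (simp add: negate_head_negate_head)
  consider "T = shift_fwd \<kappa>" | "T = negate_head ms \<circ> apply_rho Qt \<rho>" | "T = negate_head ms \<circ> shift_bwd \<kappa>"
    using assms by (auto simp: sim_steps_def split: if_splits)
  then show ?thesis
  proof cases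
    case 1
    then show ?thesis
      using shift_fwd_ok shift_bwd_shift_fwd by (auto intro: inj_on_inverseI[where g = "shift_bwd \<kappa>"])
  next
    case 2
    then show ?thesis
      using negate_head_ok apply_rho_ok inj_on_apply_rho
      by (auto intro!: comp_inj_on inj_on_subset[OF inj_neg])
  next
    case 3
    have "inj_on (shift_bwd \<kappa>) {L. state_ok L}"
      using shift_fwd_shift_bwd by (auto intro: inj_on_inverseI[where g = "shift_fwd \<kappa>"])
    with 3 show ?thesis
      using negate_head_ok shift_bwd_ok by (auto intro!: comp_inj_on inj_on_subset[OF inj_neg])
  qed
qed

lemma state_query_Cons:
  "g < \<kappa> \<Longrightarrow> a < 2^ms \<Longrightarrow> QL f (g, t, a # as, u) = (g, t, ((a + v f t g) mod 2^ms) # as, u)"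
  by (simp add: state_query_def)

definition computing_state :: "('d \<Rightarrow> 'k) \<Rightarrow> nat \<Rightarrow> nat \<Rightarrow> nat \<Rightarrow> sim_state" where
  "computing_state f t u j = (j, t, replicate (\<kappa> - j) 0 @ map (v f t) [0..<j], u)"

definition uncomputing_state :: "('d \<Rightarrow> 'k) \<Rightarrow> nat \<Rightarrow> nat \<Rightarrow> nat \<Rightarrow> sim_state" where
  "uncomputing_state f t u j =
     (j, t, ((2^ms - v f t j) mod 2^ms) # replicate (\<kappa> - 1 - j) 0 @ map (v f t) [0..<j], u)"

lemma compute_step:
  assumes "Suc j < \<kappa>"
  shows "(shift_fwd \<kappa> \<circ> QL f) (computing_state f t u j) = computing_state f t u (Suc j)"
proof -
  have "replicate (\<kappa> - j) (0::nat) = 0 # replicate (\<kappa> - Suc j) 0"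
    using assms by (simp add: Suc_diff_Suc[symmetric])
  moreover have "Suc j < 2^\<kappa>" using assms less_exp[of \<kappa>] by linarith
  ultimately show ?thesis
    using assms by (simp add: computing_state_def state_query_Cons query_value_lt shift_fwd_def)
qed

lemma compute_phase: "j < \<kappa> \<Longrightarrow> ((shift_fwd \<kappa> \<circ> QL f) ^^ j) (0, t, replicate \<kappa> 0, u) = computing_state f t u j"
proof (induction j)
  case 0
  then show ?case by (simp add: computing_state_def)
next
  case (Suc j)
  then show ?case using compute_step[of j f t u] by simp
qed

lemma uncompute_step:
  assumes "Suc j < \<kappa>"
  shows "(negate_head ms \<circ> shift_bwd \<kappa> \<circ> QL f) (uncomputing_state f t u (Suc j)) = uncomputing_state f t u j"
proof -
  have "QL f (uncomputing_state f t u (Suc j))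
      = (Suc j, t, (0 # replicate (\<kappa> - 1 - Suc j) 0 @ map (v f t) [0..<j]) @ [v f t j], u)"
    using assms query_value_lt mod_sub_add_mod
    by (simp add: uncomputing_state_def state_query_Cons add.commute)
  moreover have "j < 2^\<kappa>" using assms less_exp[of \<kappa>] by linarith
  then have "(Suc j + 2^\<kappa> - 1) mod 2^\<kappa> = j" by simp
  moreover have "replicate (\<kappa> - 1 - j) (0::nat) = 0 # replicate (\<kappa> - 1 - Suc j) 0"
    using assms by (simp add: Suc_diff_Suc[symmetric])
  ultimately show ?thesis
    by (simp add: shift_bwd_def inv_rotate1_Cons butlast_append negate_head_def uncomputing_state_def)
qed

lemma uncompute_phase:
  "j + i < \<kappa> \<Longrightarrow> ((negate_head ms \<circ> shift_bwd \<kappa> \<circ> QL f) ^^ i) (uncomputing_state f t u (j + i))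
    = uncomputing_state f t u j"
proof (induction i)
  case (Suc i)
  then show ?case using uncompute_step[of "j + i" f t u] by (simp add: funpow_Suc_right del: funpow.simps)
qed simp

lemma alternate_sim_steps:
  "alternate (QL f) Ts = ((negate_head ms \<circ> shift_bwd \<kappa> \<circ> QL f) ^^ (\<kappa> - 1))
     \<circ> (negate_head ms \<circ> apply_rho Qt \<rho> \<circ> QL f) \<circ> ((shift_fwd \<kappa> \<circ> QL f) ^^ (\<kappa> - 1))"
  unfolding sim_steps_def alternate_append alternate.simps alternate_replicate by (simp only: comp_assoc)

lemma turn_step:
  assumes \<Gamma>: "\<forall>s. gt s = \<rho> s (map (\<lambda>j. \<beta> (f (\<eta> j s))) [0..<\<kappa>])"
  shows "(negate_head ms \<circ> apply_rho Qt \<rho> \<circ> QL f) (computing_state f t u (\<kappa> - 1))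
    = uncomputing_state f t (if t \<in> qZ Qt then add_target Qt (qbeta Qt (gt (qtau Qt t))) u else u) (\<kappa> - 1)"
    (is "_ = uncomputing_state f t ?u' _")
proof -
  let ?vs = "v f t (\<kappa> - 1) # map (v f t) [0..<\<kappa> - 1]"
  have "[0..<\<kappa>] = [0..<\<kappa> - 1] @ [\<kappa> - 1]" using \<kappa>_pos by (cases \<kappa>) auto
  then have "rotate1 ?vs = map (v f t) [0..<\<kappa>]" by simp
  moreover have "\<rho> (qtau Qt t) (map (v f t) [0..<\<kappa>]) = gt (qtau Qt t)" if "t \<in> qZ Qt"
  proof -
    have "map (v f t) [0..<\<kappa>] = map (\<lambda>j. \<beta> (f (\<eta> j (qtau Qt t)))) [0..<\<kappa>]"
      using that by (simp add: query_value_def)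
    then show ?thesis using \<Gamma> by metis
  qed
  ultimately have "apply_rho Qt \<rho> (\<kappa> - 1, t, ?vs, u) = (\<kappa> - 1, t, ?vs, ?u')"
    by (simp add: apply_rho_def)
  moreover have "computing_state f t u (\<kappa> - 1) = (\<kappa> - 1, t, 0 # map (v f t) [0..<\<kappa> - 1], u)"
    using \<kappa>_pos by (simp add: computing_state_def)
  ultimately show ?thesis
    using \<kappa>_pos query_value_lt
    by (simp add: state_query_Cons negate_head_def uncomputing_state_def)
qed

lemma final_query: "QL f (uncomputing_state f t u 0) = (0, t, replicate \<kappa> 0, u)"
proof -
  have "replicate \<kappa> (0::nat) = 0 # replicate (\<kappa> - 1) 0" using \<kappa>_pos by (cases \<kappa>) auto
  then show ?thesis
    using \<kappa>_pos query_value_lt mod_sub_add_mod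
    by (simp add: uncomputing_state_def state_query_Cons add.commute)
qed

lemma sim_steps_correct:
  assumes \<Gamma>: "\<forall>s. gt s = \<rho> s (map (\<lambda>j. \<beta> (f (\<eta> j s))) [0..<\<kappa>])"
  shows "QL f (alternate (QL f) Ts (0, t, replicate \<kappa> 0, u))
    = (0, t, replicate \<kappa> 0, if t \<in> qZ Qt then add_target Qt (qbeta Qt (gt (qtau Qt t))) u else u)"
    (is "_ = (0, t, _, ?u')")
proof -
  have k: "\<kappa> - 1 < \<kappa>" using \<kappa>_pos by simp
  have "alternate (QL f) Ts (0, t, replicate \<kappa> 0, u)
      = ((negate_head ms \<circ> shift_bwd \<kappa> \<circ> QL f) ^^ (\<kappa> - 1))
          ((negate_head ms \<circ> apply_rho Qt \<rho> \<circ> QL f) (((shift_fwd \<kappa> \<circ> QL f) ^^ (\<kappa> - 1)) (0, t, replicate \<kappa> 0, u)))"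
    by (simp only: alternate_sim_steps comp_apply)
  also have "\<dots> = ((negate_head ms \<circ> shift_bwd \<kappa> \<circ> QL f) ^^ (\<kappa> - 1)) (uncomputing_state f t ?u' (\<kappa> - 1))"
    by (simp only: compute_phase[OF k] turn_step[OF \<Gamma>])
  also have "\<dots> = uncomputing_state f t ?u' 0"
    using uncompute_phase[of 0 "\<kappa> - 1" f t ?u'] k by simp
  finally show ?thesis by (simp add: final_query)
qed

lemma start_ok:
  assumes "y < 2^qm Qt"
  shows "state_ok (0, y div 2^w, replicate \<kappa> 0, y mod 2^w)"
proof -
  have "y < 2^m1 * 2^w" using assms qm_split by (metis power_add)
  then show ?thesis by (simp add: state_ok_def div_less_iff_less_mult)
qed

sublocale register_embedding "qm Qt" width emb unemb
proof
  fix y :: nat assume y: "y < 2^qm Qt"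
  show "emb y < 2^width" using encode_lt[OF start_ok[OF y]] by (simp add: embed_basis_def)
  show "unemb (emb y) = y"
    using decode_encode[OF start_ok[OF y]] by (simp add: embed_basis_def unembed_basis_def div_mult_mod_eq)
next
  fix n
  obtain g t as u where D: "decode n = (g, t, as, u)" by (cases "decode n")
  then have "t < 2^m1" "u < 2^w" by (auto simp: decode_def Let_def)
  then have "t * 2^w + u < 2^qm Qt" using qm_split by (metis concat_bits_lt)
  then show "unemb n < 2^qm Qt" using D by (simp add: unembed_basis_def)
qed

lemma sim_basis_map_embed:
  assumes \<Gamma>: "\<forall>s. gt s = \<rho> s (map (\<lambda>j. \<beta> (f (\<eta> j s))) [0..<\<kappa>])" and y: "y < 2^qm Qt"
  shows "query_map Q f (alternate (query_map Q f) (map basis_map Ts) (emb y)) = emb (query_map Qt gt y)"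
proof -
  let ?t = "y div 2^w" and ?u = "y mod 2^w"
  let ?u' = "if ?t \<in> qZ Qt then add_target Qt (qbeta Qt (gt (qtau Qt ?t))) ?u else ?u"
  let ?L = "alternate (QL f) Ts (0, ?t, replicate \<kappa> 0, ?u)"
  have "alternate (query_map Q f) (map basis_map Ts) (emb y) = encode ?L \<and> state_ok ?L"
    unfolding embed_basis_def
    by (rule alternate_semiconj[where P = state_ok])
      (use query_map_encode state_query_ok sim_steps_ok_inj basis_map_encode start_ok[OF y] in auto)
  then have "query_map Q f (alternate (query_map Q f) (map basis_map Ts) (emb y)) = encode (0, ?t, replicate \<kappa> 0, ?u')"
    using query_map_encode sim_steps_correct[OF \<Gamma>] by simp
  moreover have "query_map Qt gt y = ?t * 2^w + ?u'"
    using query_map_split[OF Qt_valid, of "y mod 2^w" gt "y div 2^w"] by (simp add: div_mult_mod_eq)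
  moreover have "?u' < 2^w" by (simp add: add_target_lt[OF Qt_valid])
  ultimately show ?thesis by (simp add: embed_basis_def)
qed

lemma sim_perms_lt_inj:
  "\<forall>p\<in>set (map basis_map Ts). (\<forall>n<2^width. p n < 2^width) \<and> inj_on p {..<2^width}"
  using sim_steps_ok_inj basis_map_lt inj_on_basis_map by auto

lemma sim_block_unitary: "unitary_op (qm Qt) U \<Longrightarrow> V \<in> set (sim_block \<kappa> ms Qt \<rho> U) \<Longrightarrow> unitary_op width V"
  using sim_perms_lt_inj unitary_perm_mat unitary_ext_mat by (auto simp: sim_block_def)

lemma length_sim_block: "length (sim_block \<kappa> ms Qt \<rho> U) = 2 * \<kappa>"
  using \<kappa>_pos by (simp add: sim_block_def sim_steps_def)

lemma lifts_run_sim_block: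
  assumes \<Gamma>: "\<forall>s. gt s = \<rho> s (map (\<lambda>j. \<beta> (f (\<eta> j s))) [0..<\<kappa>])"
    and X: "lifts (qm Qt) width emb X Xt"
  shows "lifts (qm Qt) width emb (run_ops width (query_op Q f) X (sim_block \<kappa> ms Qt \<rho> U))
    (mmul (qm Qt) U (mmul (qm Qt) (query_op Qt gt) Xt))"
proof -
  let ?q = "query_map Q f" and ?ps = "map basis_map Ts"
  have q: "\<forall>n<2^width. ?q n < 2^width"
    using query_map_lt[OF sim_query_valid] by (simp add: sim_query_def)
  have ps: "\<forall>p\<in>set ?ps. \<forall>n<2^width. p n < 2^width" using sim_perms_lt_inj by blast
  have "run_ops width (query_op Q f) X (sim_block \<kappa> ms Qt \<rho> U)
      = mmul width (ext_mat (qm Qt) emb unemb U) (mmul width (perm_mat ?q) (mmul width (perm_mat (alternate ?q ?ps)) X))"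
    using run_ops_perm_mats[OF q ps] by (simp add: sim_block_def run_ops_append query_op_eq_perm_mat sim_steps_def)
  also have "\<dots> = mmul width (ext_mat (qm Qt) emb unemb U) (mmul width (perm_mat (?q \<circ> alternate ?q ?ps)) X)"
    using alternate_lt[OF q ps] by (simp add: mmul_perm_mat_perm_mat)
  finally show ?thesis
    unfolding query_op_eq_perm_mat
    using X q alternate_lt[OF q ps] sim_basis_map_embed[OF \<Gamma>] query_map_lt[OF Qt_valid]
    by (auto intro!: lifts_mmul_ext_mat lifts_mmul_perm_mat)
qed

lemma length_sim_blocks: "length (concat (map (sim_block \<kappa> ms Qt \<rho>) Us)) = 2 * \<kappa> * length Us"
  by (induction Us) (simp_all add: length_sim_block)

lemma lifts_run_sim_blocks:
  assumes "\<forall>s. gt s = \<rho> s (map (\<lambda>j. \<beta> (f (\<eta> j s))) [0..<\<kappa>])"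
    and "lifts (qm Qt) width emb X Xt"
  shows "lifts (qm Qt) width emb (run_ops width (query_op Q f) X (concat (map (sim_block \<kappa> ms Qt \<rho>) Us)))
    (run_ops (qm Qt) (query_op Qt gt) Xt Us)"
  using assms(2) by (induction Us arbitrary: X Xt) (simp_all add: run_ops_append lifts_run_sim_block[OF assms(1)])

context
  fixes A :: "('dt, 'kt) nmalg"
  assumes A: "nquery A = Qt"
begin

lemma nmalg_m_sim_nmalg: "nmalg_m (sim_nmalg \<kappa> ms \<eta> \<beta> \<rho> A) = width"
  using A by (simp add: nmalg_m_def sim_nmalg_def sim_query_def)

lemma nmalg_nq_sim_nmalg: "nmalg_nq (sim_nmalg \<kappa> ms \<eta> \<beta> \<rho> A) = 2 * \<kappa> * nmalg_nq A"
  using A by (simp add: nmalg_nq_def sim_nmalg_def length_sim_blocks diff_mult_distrib2)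

lemma nmalg_valid_sim_nmalg:
  assumes "nmalg_valid A"
  shows "nmalg_valid (sim_nmalg \<kappa> ms \<eta> \<beta> \<rho> A)"
proof -
  have "nops A \<noteq> []" and U: "\<forall>U\<in>set (nops A). unitary_op (qm Qt) U"
    using assms A by (auto simp: nmalg_valid_def)
  then have "unitary_op (qm Qt) (hd (nops A))" and "\<forall>U\<in>set (tl (nops A)). unitary_op (qm Qt) U"
    by (auto dest: list.set_sel)
  then show ?thesis
    using A sim_query_valid unitary_ext_mat sim_block_unitary
    by (auto simp: nmalg_valid_def sim_nmalg_def sim_query_def)
qed

lemma lifts_nmalg_op_sim_nmalg:
  assumes "\<forall>s. gt s = \<rho> s (map (\<lambda>j. \<beta> (f (\<eta> j s))) [0..<\<kappa>])"
  shows "lifts (qm Qt) width emb (nmalg_op (sim_nmalg \<kappa> ms \<eta> \<beta> \<rho> A) f) (nmalg_op A gt)"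
  using lifts_run_sim_blocks[OF assms lifts_ext_mat] A nmalg_m_sim_nmalg
  by (simp add: nmalg_op_def nmalg_m_def sim_nmalg_def)

end

end

section \<open>Lifting a quantum algorithm along register embeddings\<close>

definition decode_outcomes :: "(nat \<Rightarrow> nat \<Rightarrow> nat) \<Rightarrow> nat list \<Rightarrow> nat list" where
  "decode_outcomes unemb xs = map (\<lambda>i. unemb i (xs ! i)) [0..<length xs]"

definition encode_outcomes :: "(nat \<Rightarrow> nat \<Rightarrow> nat) \<Rightarrow> nat list \<Rightarrow> nat list" where
  "encode_outcomes emb xs = map (\<lambda>i. emb i (xs ! i)) [0..<length xs]"

definition lift_qalg :: "(nat \<Rightarrow> ('d, 'k) nmalg) \<Rightarrow> (nat \<Rightarrow> nat \<Rightarrow> nat) \<Rightarrow> (nat \<Rightarrow> nat \<Rightarrow> nat)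
    \<Rightarrow> ('dt, 'kt, 'g) qalg \<Rightarrow> ('d, 'k, 'g) qalg" where
  "lift_qalg B emb unemb At = \<lparr>qsteps = map (\<lambda>l. (B l,
       \<lambda>xs. emb l (snd (qsteps At ! l) (decode_outcomes unemb xs)))) [0..<qalg_k At],
     qphi = \<lambda>xs. qphi At (decode_outcomes unemb xs)\<rparr>"

lemma finite_outcomes: "finite (outcomes A l)"
proof -
  define b where "b = (\<Sum>i<l. (2::nat) ^ qalg_mm A i)"
  have "2 ^ qalg_mm A i \<le> b" if "i < l" for i
    unfolding b_def using that by (intro member_le_sum) auto
  then have "outcomes A l \<subseteq> {xs. set xs \<subseteq> {..<b} \<and> length xs = l}"
    by (force simp: outcomes_def in_set_conv_nth)
  then show ?thesis by (rule finite_subset) (simp add: finite_lists_length_eq)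
qed

locale qalg_lifting =
  fixes At :: "('dt, 'kt, 'g) qalg" and B :: "nat \<Rightarrow> ('d, 'k) nmalg"
    and emb unemb :: "nat \<Rightarrow> nat \<Rightarrow> nat"
  assumes At_valid: "qalg_valid At"
    and B_valid: "\<And>l. l < qalg_k At \<Longrightarrow> nmalg_valid (B l)"
    and embedding: "\<And>l. l < qalg_k At \<Longrightarrow> register_embedding (qalg_mm At l) (nmalg_m (B l)) (emb l) (unemb l)"
begin

abbreviation "k \<equiv> qalg_k At"
abbreviation "A \<equiv> lift_qalg B emb unemb At"
abbreviation "b l \<equiv> snd (qsteps At ! l)"
abbreviation "dec \<equiv> decode_outcomes unemb"
abbreviation "enc \<equiv> encode_outcomes emb"

lemma qalg_k_lift: "qalg_k A = k"
  by (simp add: qalg_k_def lift_qalg_def)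

lemma qsteps_lift: "l < k \<Longrightarrow> qsteps A ! l = (B l, \<lambda>xs. emb l (b l (dec xs)))"
  by (simp add: lift_qalg_def)

lemma qalg_mm_lift: "l < k \<Longrightarrow> qalg_mm A l = nmalg_m (B l)"
  by (simp add: qalg_mm_def qsteps_lift)

lemma b_lt: "l < k \<Longrightarrow> xs \<in> outcomes At l \<Longrightarrow> b l xs < 2 ^ qalg_mm At l"
  using At_valid by (simp add: qalg_valid_def)

lemma decode_outcomes_in: "length xs = j \<Longrightarrow> j \<le> k \<Longrightarrow> dec xs \<in> outcomes At j"
  using register_embedding.unemb_lt[OF embedding] by (simp add: outcomes_def decode_outcomes_def)

lemma encode_outcomes_in: "xs \<in> outcomes At j \<Longrightarrow> j \<le> k \<Longrightarrow> enc xs \<in> outcomes A j"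
  using register_embedding.emb_lt[OF embedding] by (auto simp: outcomes_def encode_outcomes_def qalg_mm_lift)

lemma decode_encode_outcomes: "xs \<in> outcomes At j \<Longrightarrow> j \<le> k \<Longrightarrow> dec (enc xs) = xs"
  using register_embedding.unemb_emb[OF embedding]
  by (intro nth_equalityI) (auto simp: outcomes_def encode_outcomes_def decode_outcomes_def)

lemma decode_outcomes_take: "dec (take l xs) = take l (dec xs)"
  by (intro nth_equalityI) (auto simp: decode_outcomes_def)

lemma qalg_valid_lift: "qalg_valid A"
  unfolding qalg_valid_def qalg_k_lift
proof (intro conjI allI impI ballI)
  show "1 \<le> k" using At_valid by (simp add: qalg_valid_def)
next
  fix l assume "l < k"
  then show "nmalg_valid (fst (qsteps A ! l))" by (simp add: qsteps_lift B_valid)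
next
  fix l xs assume l: "l < k" and "xs \<in> outcomes A l"
  then have "b l (dec xs) < 2 ^ qalg_mm At l"
    by (intro b_lt decode_outcomes_in) (auto simp: outcomes_def)
  then show "snd (qsteps A ! l) xs < 2 ^ qalg_mm A l"
    using l register_embedding.emb_lt[OF embedding] by (simp add: qsteps_lift qalg_mm_lift)
qed

lemma qalg_nq_lift: "qalg_nq A = (\<Sum>l<k. nmalg_nq (B l))"
  by (simp add: qalg_nq_def qalg_k_lift qsteps_lift)

lemma outcome_prob_lift:
  "outcome_prob A f xs = (\<Prod>l<k. (cmod (nmalg_op (B l) f (xs ! l) (emb l (b l (dec (take l xs))))))\<^sup>2)"
  by (simp add: outcome_prob_def qalg_k_lift qsteps_lift)

context
  fixes f :: "'d \<Rightarrow> 'k" and gt :: "'dt \<Rightarrow> 'kt"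
  assumes lifts_steps: "\<And>l. l < k \<Longrightarrow>
    lifts (qalg_mm At l) (nmalg_m (B l)) (emb l) (nmalg_op (B l) f) (nmalg_op (fst (qsteps At ! l)) gt)"
begin

lemma outcome_prob_lift_encode:
  assumes xs: "xs \<in> outcomes At k"
  shows "outcome_prob A f (enc xs) = outcome_prob At gt xs"
proof -
  have "nmalg_op (B l) f (enc xs ! l) (emb l (b l (dec (take l (enc xs)))))
      = nmalg_op (fst (qsteps At ! l)) gt (xs ! l) (b l (take l xs))" if l: "l < k" for l
  proof -
    have "take l xs \<in> outcomes At l" using xs l by (auto simp: outcomes_def)
    then have "b l (take l xs) < 2 ^ qalg_mm At l" by (rule b_lt[OF l])
    moreover have "xs ! l < 2 ^ qalg_mm At l" "length xs = k" using xs l by (auto simp: outcomes_def)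
    moreover have "dec (take l (enc xs)) = take l xs"
      using decode_encode_outcomes[OF xs] by (simp add: decode_outcomes_take)
    ultimately show ?thesis
      using lifts_steps[OF l] l unfolding lifts_def by (simp add: encode_outcomes_def)
  qed
  then show ?thesis unfolding outcome_prob_lift by (simp add: outcome_prob_def)
qed

lemma outcome_prob_lift_outside:
  assumes xs: "xs \<in> outcomes A k" and not_enc: "xs \<notin> enc ` outcomes At k"
  shows "outcome_prob A f xs = 0"
proof -
  have len: "length xs = k" using xs by (simp add: outcomes_def qalg_k_lift)
  obtain l where l: "l < k" and out: "xs ! l \<notin> emb l ` {..<2 ^ qalg_mm At l}"
  proof (rule ccontr)
    assume "\<not> thesis"
    then have "\<forall>l<k. xs ! l \<in> emb l ` {..<2 ^ qalg_mm At l}" using that by blast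
    then have "enc (dec xs) = xs"
      using len register_embedding.unemb_emb[OF embedding]
      by (intro nth_equalityI) (auto simp: encode_outcomes_def decode_outcomes_def)
    then show False using not_enc decode_outcomes_in[OF len] by (metis image_eqI order_refl)
  qed
  have "xs ! l < 2 ^ nmalg_m (B l)" using xs l by (simp add: outcomes_def qalg_k_lift qalg_mm_lift)
  moreover have "b l (dec (take l xs)) < 2 ^ qalg_mm At l"
    using l len by (intro b_lt decode_outcomes_in) auto
  ultimately have "nmalg_op (B l) f (xs ! l) (emb l (b l (dec (take l xs)))) = 0"
    using lifts_steps[OF l] out unfolding lifts_def by blast
  then show ?thesis using l by (simp add: outcome_prob_lift) (metis lessThan_iff)
qed

lemma qalg_out_lift: "qalg_out A f = qalg_out At gt"
proof
  fix C
  let ?h = "\<lambda>xs. if qphi A xs \<in> C then outcome_prob A f xs else 0"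
  have "qalg_out A f C = (\<Sum>xs\<in>enc ` outcomes At k. ?h xs)"
    unfolding qalg_out_def qalg_k_lift
    using finite_outcomes encode_outcomes_in outcome_prob_lift_outside
    by (intro sum.mono_neutral_right) auto
  also have "\<dots> = (\<Sum>xs\<in>outcomes At k. ?h (enc xs))"
    using decode_encode_outcomes by (subst sum.reindex) (auto intro: inj_on_inverseI)
  also have "\<dots> = qalg_out At gt C"
    unfolding qalg_out_def using decode_encode_outcomes outcome_prob_lift_encode
    by (intro sum.cong) (auto simp: lift_qalg_def)
  finally show "qalg_out A f C = qalg_out At gt C" .
qed

end

end

locale qalg_simulation =
  fixes \<kappa> ms :: nat and \<eta> :: "nat \<Rightarrow> 'dt \<Rightarrow> 'd" and \<beta> :: "'k \<Rightarrow> nat"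
    and \<rho> :: "'dt \<Rightarrow> nat list \<Rightarrow> 'kt" and At :: "('dt, 'kt, 'g) qalg"
  assumes \<kappa>_pos: "\<kappa> \<ge> 1" and ms_pos: "ms \<ge> 1" and \<beta>_lt: "\<And>k. \<beta> k < 2^ms"
    and At_valid: "qalg_valid At"
begin

abbreviation "step l \<equiv> fst (qsteps At ! l)"

lemma step_valid: "l < qalg_k At \<Longrightarrow> nmalg_valid (step l)"
  using At_valid by (simp add: qalg_valid_def)

lemma query_simulation_step: "l < qalg_k At \<Longrightarrow> query_simulation \<kappa> ms \<beta> (nquery (step l))"
  using \<kappa>_pos ms_pos \<beta>_lt step_valid by unfold_locales (auto simp: nmalg_valid_def)

sublocale qalg_lifting At "\<lambda>l. sim_nmalg \<kappa> ms \<eta> \<beta> \<rho> (step l)"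
  "\<lambda>l. embed_basis \<kappa> ms (nquery (step l))" "\<lambda>l. unembed_basis \<kappa> ms (nquery (step l))"
proof (rule qalg_lifting.intro[OF At_valid])
  fix l assume l: "l < qalg_k At"
  interpret query_simulation \<kappa> ms \<eta> \<beta> \<rho> "nquery (step l)" by (rule query_simulation_step[OF l])
  show "nmalg_valid (sim_nmalg \<kappa> ms \<eta> \<beta> \<rho> (step l))"
    by (rule nmalg_valid_sim_nmalg[OF refl step_valid[OF l]])
  show "register_embedding (qalg_mm At l) (nmalg_m (sim_nmalg \<kappa> ms \<eta> \<beta> \<rho> (step l)))
      (embed_basis \<kappa> ms (nquery (step l))) (unembed_basis \<kappa> ms (nquery (step l)))"
    unfolding nmalg_m_sim_nmalg[OF refl] using register_embedding_axioms
    by (simp add: qalg_mm_def nmalg_m_def)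
qed

lemma qalg_nq_sim: "qalg_nq A = 2 * \<kappa> * qalg_nq At"
proof -
  have "qalg_nq A = (\<Sum>l<qalg_k At. 2 * \<kappa> * nmalg_nq (step l))"
    unfolding qalg_nq_lift using query_simulation.nmalg_nq_sim_nmalg[OF query_simulation_step refl]
    by (intro sum.cong) auto
  then show ?thesis by (simp add: qalg_nq_def sum_distrib_left)
qed

lemma qalg_out_sim:
  assumes \<Gamma>: "\<forall>s. gt s = \<rho> s (map (\<lambda>j. \<beta> (f (\<eta> j s))) [0..<\<kappa>])"
  shows "qalg_out A f = qalg_out At gt"
proof (rule qalg_out_lift)
  fix l assume l: "l < qalg_k At"
  interpret query_simulation \<kappa> ms \<eta> \<beta> \<rho> "nquery (step l)" by (rule query_simulation_step[OF l])
  show "lifts (qalg_mm At l) (nmalg_m (sim_nmalg \<kappa> ms \<eta> \<beta> \<rho> (step l)))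
      (embed_basis \<kappa> ms (nquery (step l))) (nmalg_op (sim_nmalg \<kappa> ms \<eta> \<beta> \<rho> (step l)) f) (nmalg_op (step l) gt)"
    unfolding nmalg_m_sim_nmalg[OF refl] using lifts_nmalg_op_sim_nmalg[OF refl \<Gamma>]
    by (simp add: qalg_mm_def nmalg_m_def)
qed

end

lemma err_le_of_same_output:
  assumes "\<Gamma> ` F \<subseteq> Ft" and "\<forall>f\<in>F. qalg_out A f = qalg_out At (\<Gamma> f)"
  shows "err (St \<circ> \<Gamma>) A F \<theta> \<le> err St At Ft \<theta>"
proof -
  have "err (St \<circ> \<Gamma>) A F \<theta> = (SUP f\<in>F. err_pt St At (\<Gamma> f) \<theta>)"
    unfolding err_def using assms(2) by (intro SUP_cong) (simp_all add: err_pt_def)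
  also have "\<dots> \<le> err St At Ft \<theta>"
    unfolding err_def using assms(1) by (intro SUP_mono) auto
  finally show ?thesis .
qed

lemma qerr_le_of_simulation:
  fixes \<Gamma> :: "('d \<Rightarrow> 'k) \<Rightarrow> 'dt \<Rightarrow> 'kt" and St :: "('dt \<Rightarrow> 'kt) \<Rightarrow> 'g::real_normed_vector"
  assumes "\<Gamma> ` F \<subseteq> Ft"
    and sim: "\<And>At :: ('dt, 'kt, 'g) qalg. qalg_valid At \<Longrightarrow> \<exists>A :: ('d, 'k, 'g) qalg.
      qalg_valid A \<and> qalg_nq A = c * qalg_nq At \<and> (\<forall>f\<in>F. qalg_out A f = qalg_out At (\<Gamma> f))"
  shows "qerr (c * n) (St \<circ> \<Gamma>) F \<le> qerr n St Ft"
  unfolding qerr_def eq_theta_def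
proof (rule INF_greatest)
  fix At :: "('dt, 'kt, 'g) qalg" assume "At \<in> {A. qalg_valid A \<and> qalg_nq A \<le> n}"
  then obtain A :: "('d, 'k, 'g) qalg" where A: "qalg_valid A" "qalg_nq A \<le> c * n"
    and out: "\<forall>f\<in>F. qalg_out A f = qalg_out At (\<Gamma> f)"
    using sim by (force intro: mult_le_mono2)
  then have "(INF A\<in>{A. qalg_valid A \<and> qalg_nq A \<le> c * n}. err (St \<circ> \<Gamma>) A F (1/4)) \<le> err (St \<circ> \<Gamma>) A F (1/4)"
    by (intro INF_lower) simp
  also have "\<dots> \<le> err St At Ft (1/4)" by (rule err_le_of_same_output[OF assms(1) out])
  finally show "(INF A\<in>{A. qalg_valid A \<and> qalg_nq A \<le> c * n}. err (St \<circ> \<Gamma>) A F (1/4)) \<le> err St At Ft (1/4)" .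
qed

theorem corollary1:
  fixes F :: "('d \<Rightarrow> 'k) set" and Ft :: "('dt \<Rightarrow> 'kt) set"
    and \<Gamma> :: "('d \<Rightarrow> 'k) \<Rightarrow> ('dt \<Rightarrow> 'kt)"
    and \<kappa> mstar :: nat
    and \<eta> :: "nat \<Rightarrow> 'dt \<Rightarrow> 'd" and \<beta> :: "'k \<Rightarrow> nat" and \<rho> :: "'dt \<Rightarrow> nat list \<Rightarrow> 'kt"
  assumes "F \<noteq> {}" and "Ft \<noteq> {}" and "\<Gamma> ` F \<subseteq> Ft"
    and "\<kappa> \<ge> 1" and "mstar \<ge> 1"
    and "\<forall>k. \<beta> k < 2 ^ mstar"
    and "\<forall>f\<in>F. \<forall>s. \<Gamma> f s = \<rho> s (map (\<lambda>j. \<beta> (f (\<eta> j s))) [0..<\<kappa>])"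
  shows "(\<forall>At :: ('dt, 'kt, 'g::real_normed_vector) qalg. qalg_valid At \<longrightarrow>
            (\<exists>A :: ('d, 'k, 'g) qalg. qalg_valid A \<and> qalg_nq A = 2 * \<kappa> * qalg_nq At
               \<and> (\<forall>f\<in>F. qalg_out A f = qalg_out At (\<Gamma> f))))
       \<and> (\<forall>(St :: ('dt \<Rightarrow> 'kt) \<Rightarrow> 'g) n. qerr (2 * \<kappa> * n) (St \<circ> \<Gamma>) F \<le> qerr n St Ft)"
proof -
  have sim: "\<exists>A :: ('d, 'k, 'g) qalg. qalg_valid A \<and> qalg_nq A = 2 * \<kappa> * qalg_nq At
      \<and> (\<forall>f\<in>F. qalg_out A f = qalg_out At (\<Gamma> f))" if "qalg_valid At" for At :: "('dt, 'kt, 'g) qalg"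
  proof -
    interpret qalg_simulation \<kappa> mstar \<eta> \<beta> \<rho> At
      using assms(4-6) that by unfold_locales auto
    show ?thesis using qalg_valid_lift qalg_nq_sim qalg_out_sim assms(7) by blast
  qed
  then show ?thesis using qerr_le_of_simulation[OF assms(3)] by blast
qed

end
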